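(* There does not exist any GRLOWJFA that accepts the language $\{a^nb^n : n\ge 0\}$.
   Context: "Subword" means a contiguous factor. A GRLOWJFA is a tuple $\mathcal{A}=(\Sigma,Q,q_0,F,R)$ with $\Sigma$ a finite alphabet, $Q$ a finite state set, $q_0\in Q$, $F\subseteq Q$, and $R\subset Q\times\Sigma^+\times Q$ a finite set of rules such that for each $p\in Q$, $w\in\Sigma^+$ at most one $q$ has $(p,w,q)\in R$ (meaning: go from $p$ to $q$ deleting $w$). $\Sigma_p=\{w:(p,w,q)\in R\text{ for some }q\}$. Configurations lie in $\Sigma^*Q\Sigma^*$. Moves $\curvearrowright$: (1) for $t,u,v\in\Sigma^*$ and $(p,x,q)\in R$: $tpuxv\curvearrowright tuqv$ provided $u$ contains no word of $\Sigma_p$ as a subword and there are no $u_1,x_2\in\Sigma^*$, $u_2,x_1\in\Sigma^+$ with $u=u_1u_2$, $x=x_1x_2$, $u_2x_1=x$; (2) for $x\in\Sigma^+$, $y\in\Sigma^*$ with $y$ containing no word of $\Sigma_p$ as a subword: $xpy\curvearrowright pxy$. The accepted language is $L_{GRL}(\mathcal{A})=\{w\in\Sigma^*: q_0w\curvearrowright^* q_f \text{ for some } q_f\in F\}$. *)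

theory Defs
  imports Main "HOL-Library.Sublist"
begin

text \<open>A GRLOWJFA (Sigma, Q, q0, F, R). Rules (p, w, q) mean: go from p to q deleting w.
  Configurations t p u (in Sigma* Q Sigma*) are represented as triples (t, p, u).\<close>

definition is_GRLOWJFA ::
  "'a set \<Rightarrow> 'q set \<Rightarrow> 'q \<Rightarrow> 'q set \<Rightarrow> ('q \<times> 'a list \<times> 'q) set \<Rightarrow> bool" where
  "is_GRLOWJFA Sig Q q0 F R \<longleftrightarrow>
     finite Sig \<and> finite Q \<and> q0 \<in> Q \<and> F \<subseteq> Q \<and> finite R \<and>
     (\<forall>(p, w, q) \<in> R. p \<in> Q \<and> q \<in> Q \<and> w \<noteq> [] \<and> w \<in> lists Sig) \<and>
     (\<forall>p w q q'. (p, w, q) \<in> R \<longrightarrow> (p, w, q') \<in> R \<longrightarrow> q = q')"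

definition Sigma_p :: "('q \<times> 'a list \<times> 'q) set \<Rightarrow> 'q \<Rightarrow> 'a list set" where
  "Sigma_p R p = {w. \<exists>q. (p, w, q) \<in> R}"

definition no_rule_word :: "('q \<times> 'a list \<times> 'q) set \<Rightarrow> 'q \<Rightarrow> 'a list \<Rightarrow> bool" where
  "no_rule_word R p u \<longleftrightarrow> (\<forall>w \<in> Sigma_p R p. \<not> sublist w u)"

inductive grl_move :: "('q \<times> 'a list \<times> 'q) set \<Rightarrow> 'a list \<times> 'q \<times> 'a list \<Rightarrow> 'a list \<times> 'q \<times> 'a list \<Rightarrow> bool"
  for R where
  delete: "\<lbrakk> (p, x, q) \<in> R; no_rule_word R p u;
            \<not> (\<exists>u1 u2 x1 x2. u = u1 @ u2 \<and> x = x1 @ x2 \<and> u2 \<noteq> [] \<and> x1 \<noteq> [] \<and> u2 @ x1 = x) \<rbrakk>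
           \<Longrightarrow> grl_move R (t, p, u @ x @ v) (t @ u, q, v)"
| jump: "\<lbrakk> x \<noteq> []; no_rule_word R p y \<rbrakk> \<Longrightarrow> grl_move R (x, p, y) ([], p, x @ y)"

definition L_GRL :: "'a set \<Rightarrow> 'q \<Rightarrow> 'q set \<Rightarrow> ('q \<times> 'a list \<times> 'q) set \<Rightarrow> 'a list set" where
  "L_GRL Sig q0 F R = {w \<in> lists Sig. \<exists>qf \<in> F. (grl_move R)\<^sup>*\<^sup>* ([], q0, w) ([], qf, [])}"

end

theory Submission
  imports Defs
begin

text \<open>Deleting the rule words of a path of rules one after another, always at the very front
  of the input, is a legal run; conversely the words deleted along any accepting run form such
  a path, of the same total length as the input. Hence every word of length 2N accepted by the
  automaton yields a path word of length 2N, which, if the language is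
  \<open>{a\<^sup>n b\<^sup>n}\<close>, must be \<open>a\<^sup>N b\<^sup>N\<close>. Cutting each path for \<open>a\<^sup>N b\<^sup>N\<close> at the last
  rule boundary at most m letters before the end of the a-block (m the longest rule word) gives a
  pair (state, distance) from a finite set; two different N sharing a pair can be spliced into a
  path, hence an accepted word, \<open>a\<^sup>N b\<^sup>M\<close> with N \<noteq> M.\<close>

inductive rule_path :: "('q \<times> 'a list \<times> 'q) set \<Rightarrow> 'q \<Rightarrow> 'a list \<Rightarrow> 'q \<Rightarrow> bool"
  for R where
  rule_path_Nil: "rule_path R p [] p"
| rule_path_Cons: "(p, x, q) \<in> R \<Longrightarrow> rule_path R q w r \<Longrightarrow> rule_path R p (x @ w) r"

definition rule_path_lang :: "('q \<times> 'a list \<times> 'q) set \<Rightarrow> 'q \<Rightarrow> 'q set \<Rightarrow> 'a list set" where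
  "rule_path_lang R q0 F = {w. \<exists>qf \<in> F. rule_path R q0 w qf}"

lemma rule_path_append:
  "rule_path R p v q \<Longrightarrow> rule_path R q w r \<Longrightarrow> rule_path R p (v @ w) r"
  by (induction rule: rule_path.induct) (auto intro: rule_path.intros)

lemma rule_path_in_lists:
  "rule_path R p w q \<Longrightarrow> \<forall>(p, x, q) \<in> R. x \<in> lists Sig \<Longrightarrow> w \<in> lists Sig"
  by (induction rule: rule_path.induct) auto

lemma rule_path_end_state:
  "rule_path R p w q \<Longrightarrow> q \<in> insert p ((\<lambda>(_, _, q). q) ` R)"
  by (induction rule: rule_path.induct) force+

lemma rule_path_split_near:
  assumes "rule_path R p (u @ v) q" and "\<forall>(p, x, q) \<in> R. length x \<le> m"
  shows "\<exists>u1 u2 r. u = u1 @ u2 \<and> length u2 \<le> m \<and> rule_path R p u1 r \<and> rule_path R r (u2 @ v) q"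
  using assms
proof (induction p "u @ v" q arbitrary: u rule: rule_path.induct)
  case (rule_path_Nil p)
  then show ?case by (auto intro: rule_path.intros)
next
  case (rule_path_Cons p x q' w q)
  show ?case
  proof (cases "length u \<le> m")
    case True
    have "rule_path R p (u @ v) q"
      using rule_path.rule_path_Cons[OF rule_path_Cons.hyps(1,2)] rule_path_Cons.hyps(4) by simp
    with True show ?thesis
      by (intro exI[of _ "[]"] exI[of _ u] exI[of _ p]) (simp add: rule_path.rule_path_Nil)
  next
    case False
    with rule_path_Cons.hyps(1) rule_path_Cons.prems have "length x \<le> length u" by fastforce
    with rule_path_Cons.hyps(4) obtain u' where u: "u = x @ u'" and w: "w = u' @ v"
      by (auto simp: append_eq_append_conv_if) (metis append_take_drop_id)
    from rule_path_Cons.hyps(3)[OF w rule_path_Cons.prems] obtain u1 u2 r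
      where "u' = u1 @ u2" "length u2 \<le> m" "rule_path R q' u1 r" "rule_path R r (u2 @ v) q"
      by blast
    with u show ?thesis
      by (intro exI[of _ "x @ u1"] exI[of _ u2] exI[of _ r])
        (simp add: rule_path.rule_path_Cons[OF rule_path_Cons.hyps(1)])
  qed
qed

lemma rule_path_imp_run:
  assumes "rule_path R p w q" and "\<forall>(p, x, q) \<in> R. x \<noteq> []"
  shows "(grl_move R)\<^sup>*\<^sup>* ([], p, w) ([], q, [])"
  using assms
proof (induction rule: rule_path.induct)
  case (rule_path_Nil p)
  then show ?case by simp
next
  case (rule_path_Cons p x q w r)
  have "no_rule_word R p []"
    using rule_path_Cons.prems unfolding no_rule_word_def Sigma_p_def by auto
  then have "grl_move R ([], p, [] @ x @ w) ([] @ [], q, w)"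
    by (rule grl_move.delete[OF rule_path_Cons.hyps(1)]) auto
  with rule_path_Cons show ?case
    by (simp add: converse_rtranclp_into_rtranclp)
qed

lemma run_imp_rule_path:
  assumes "(grl_move R)\<^sup>*\<^sup>* (t, p, u) ([], qf, [])"
  shows "\<exists>w. rule_path R p w qf \<and> length w = length t + length u"
  using assms
proof (induction "(t, p, u)" arbitrary: t p u rule: converse_rtranclp_induct)
  case base
  then show ?case by (auto intro: rule_path.intros)
next
  case (step c)
  from step.hyps(1) show ?case
  proof (cases rule: grl_move.cases)
    case (delete x q u' v)
    with step.hyps(3) obtain w where "rule_path R q w qf" "length w = length (t @ u') + length v"
      by blast
    with delete show ?thesis by (auto intro!: exI[of _ "x @ w"] intro: rule_path.intros)
  next
    case jump
    with step.hyps(3) show ?thesis by auto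
  qed
qed

lemma rule_path_lang_subset_L_GRL:
  assumes "is_GRLOWJFA Sig Q q0 F R"
  shows "rule_path_lang R q0 F \<subseteq> L_GRL Sig q0 F R"
proof
  fix w assume "w \<in> rule_path_lang R q0 F"
  then obtain qf where qf: "qf \<in> F" "rule_path R q0 w qf" unfolding rule_path_lang_def by blast
  have "\<forall>(p, x, q) \<in> R. p \<in> Q \<and> q \<in> Q \<and> x \<noteq> [] \<and> x \<in> lists Sig"
    using assms unfolding is_GRLOWJFA_def by blast
  then have "\<forall>(p, x, q) \<in> R. x \<noteq> []" and "\<forall>(p, x, q) \<in> R. x \<in> lists Sig"
    by auto
  with qf show "w \<in> L_GRL Sig q0 F R"
    unfolding L_GRL_def by (auto dest: rule_path_imp_run rule_path_in_lists)
qed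

lemma L_GRL_imp_rule_path_lang:
  assumes "v \<in> L_GRL Sig q0 F R"
  shows "\<exists>w \<in> rule_path_lang R q0 F. length w = length v"
  using assms run_imp_rule_path[of R "[]" q0 v]
  unfolding L_GRL_def rule_path_lang_def by fastforce

lemma rule_path_replicate_split:
  assumes "rule_path R p (replicate N a @ v) q" and "\<forall>(p, x, q) \<in> R. length x \<le> m"
  obtains r k where "k \<le> m" "k \<le> N" "rule_path R p (replicate (N - k) a) r"
    "rule_path R r (replicate k a @ v) q"
proof -
  from rule_path_split_near[OF assms] obtain u1 u2 r where
    split: "replicate N a = u1 @ u2" "length u2 \<le> m" "rule_path R p u1 r" "rule_path R r (u2 @ v) q"
    by blast
  from arg_cong[OF split(1), of length] have len: "length u1 + length u2 = N"
    by simp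
  have "\<forall>c \<in> set (u1 @ u2). c = a"
    by (simp flip: split(1))
  then have "u1 = replicate (length u1) a" and u2: "u2 = replicate (length u2) a"
    by (simp_all add: replicate_length_same)
  with len have u1: "u1 = replicate (N - length u2) a"
    by (metis add_diff_cancel_right')
  show thesis
    using split(2-4) len by (intro that[of "length u2" r]) (simp_all flip: u1 u2)
qed

lemma rule_path_lang_replicate_exchange_tails:
  assumes "finite R" and "\<And>N. replicate N a @ ys N \<in> rule_path_lang R q0 F"
  shows "\<exists>N M. N \<noteq> M \<and> replicate N a @ ys M \<in> rule_path_lang R q0 F"
proof -
  define m where "m = Max ((\<lambda>(_, x, _). length x) ` R)"
  have m: "\<forall>(p, x, q) \<in> R. length x \<le> m"
  proof clarify
    fix p x q assume "(p, x, q) \<in> R"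
    then show "length x \<le> m"
      unfolding m_def using assms(1) by (intro Max_ge) force+
  qed
  define S where "S = insert q0 ((\<lambda>(_, _, q). q) ` R) \<times> {..m}"
  define cut where "cut N = (\<lambda>(r, k). k \<le> N \<and> rule_path R q0 (replicate (N - k) a) r \<and>
    (\<exists>qf \<in> F. rule_path R r (replicate k a @ ys N) qf))" for N
  have "\<exists>rk \<in> S. cut N rk" for N
  proof -
    from assms(2) obtain qf where qf: "qf \<in> F" "rule_path R q0 (replicate N a @ ys N) qf"
      unfolding rule_path_lang_def by blast
    from rule_path_replicate_split[OF qf(2) m] obtain r k where "k \<le> m" "k \<le> N"
      "rule_path R q0 (replicate (N - k) a) r" "rule_path R r (replicate k a @ ys N) qf"
      by blast
    with qf(1) rule_path_end_state[of R q0 _ r] show ?thesis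
      unfolding cut_def S_def by blast
  qed
  moreover have "finite S" using assms(1) unfolding S_def by simp
  ultimately obtain r k where inf: "infinite {N. cut N (r, k)}"
    using pigeonhole_infinite_rel[of "UNIV :: nat set" S cut] by auto
  then obtain N where N: "cut N (r, k)"
    using infinite_imp_nonempty by blast
  from inf have "infinite ({N. cut N (r, k)} - {N})"
    by (rule infinite_remove)
  then obtain M where "M \<in> {N. cut N (r, k)} - {N}"
    using infinite_imp_nonempty by blast
  with N have NM: "N \<noteq> M" "cut N (r, k)" "cut M (r, k)" by auto
  then obtain qf where qf: "qf \<in> F"
    and path: "rule_path R q0 (replicate (N - k) a @ replicate k a @ ys M) qf"
    unfolding cut_def by (auto intro: rule_path_append)
  have "replicate N a = replicate (N - k) a @ replicate k a"
    using NM(2) unfolding cut_def by (simp flip: replicate_add)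
  with path have "rule_path R q0 (replicate N a @ ys M) qf"
    by simp
  with qf NM(1) show ?thesis
    unfolding rule_path_lang_def by blast
qed

lemma replicate_append_replicate_eq_iff:
  assumes "a \<noteq> b"
  shows "replicate i a @ replicate j b = replicate i' a @ replicate j' b \<longleftrightarrow> i = i' \<and> j = j'"
proof
  assume eq: "replicate i a @ replicate j b = replicate i' a @ replicate j' b"
  have "filter (\<lambda>x. x = c) (replicate i a @ replicate j b) =
    filter (\<lambda>x. x = c) (replicate i' a @ replicate j' b)" for c
    using eq by simp
  from this[of a] this[of b] assms show "i = i' \<and> j = j'"
    by (simp add: filter_replicate)
qed simp

theorem lemma9:
  fixes a b :: 'a
  assumes "a \<noteq> b"
  shows "\<not> (\<exists>(Sig :: 'a set) (Q :: 'q set) q0 F R.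
            is_GRLOWJFA Sig Q q0 F R \<and> a \<in> Sig \<and> b \<in> Sig \<and>
            L_GRL Sig q0 F R = {replicate n a @ replicate n b | n. True})"
proof
  assume "\<exists>(Sig :: 'a set) (Q :: 'q set) q0 F R.
            is_GRLOWJFA Sig Q q0 F R \<and> a \<in> Sig \<and> b \<in> Sig \<and>
            L_GRL Sig q0 F R = {replicate n a @ replicate n b | n. True}"
  then obtain Sig and Q :: "'q set" and q0 F R where G: "is_GRLOWJFA Sig Q q0 F R"
    and L: "L_GRL Sig q0 F R = {replicate n a @ replicate n b | n. True}"
    by blast
  have sub: "rule_path_lang R q0 F \<subseteq> {replicate n a @ replicate n b | n. True}"
    using rule_path_lang_subset_L_GRL[OF G] L by simp
  have "replicate N a @ replicate N b \<in> rule_path_lang R q0 F" for N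
  proof -
    obtain w where w: "w \<in> rule_path_lang R q0 F" "length w = N + N"
      using L_GRL_imp_rule_path_lang[of "replicate N a @ replicate N b" Sig q0 F R] L by auto
    moreover from w(1) sub obtain n where n: "w = replicate n a @ replicate n b" by blast
    moreover from w(2) n have "n = N" by simp
    ultimately show ?thesis by simp
  qed
  moreover have "finite R" using G unfolding is_GRLOWJFA_def by simp
  ultimately obtain N M where "N \<noteq> M" "replicate N a @ replicate M b \<in> rule_path_lang R q0 F"
    using rule_path_lang_replicate_exchange_tails[of R a "\<lambda>N. replicate N b"] by blast
  with sub replicate_append_replicate_eq_iff[OF assms] show False by auto
qed

end
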